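(* Let $S\ge 2$. As $m\to\infty$, $$B(m,m,\dots,m)\sim\frac{S^{Sm+\frac12}}{(2\pi m)^{\frac{S-1}{2}}\,(S-1)^S},$$ where $B$ has $S$ arguments all equal to $m$.
   Context: For positive integers $m_1,\dots,m_S$, $B(m_1,\dots,m_S)=\sum_{\ell_1=0}^{m_1-1}\cdots\sum_{\ell_S=0}^{m_S-1}\frac{(\ell_1+\dots+\ell_S)!}{\ell_1!\cdots\ell_S!}$. *)

theory Defs
  imports "HOL-Analysis.Analysis" "HOL-Library.Landau_Symbols"
begin

definition B :: "nat \<Rightarrow> (nat \<Rightarrow> nat) \<Rightarrow> real" where
  "B S m = (\<Sum>l \<in> PiE {..<S} (\<lambda>i. {..<m i}).
      real (fact (\<Sum>i<S. l i)) / (\<Prod>i<S. real (fact (l i))))"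

end

theory Submission
  imports Defs "HOL-Real_Asymp.Real_Asymp"
begin

text \<open>
  Let N(t) = (t_1 + ... + t_S)! / (t_1! ... t_S!). Reflecting every index l_i to m - 1 - l_i
  gives B(m,...,m) = \<Sum> N(m - 1 - d) over d \<in> [0,m)^S. For fixed d the ratio
  N(m - 1 - d) / N(m,...,m) tends to S^(-k) with k = \<Sum> (d_i + 1), and it is bounded by
  3/2 (2/3)^k, because raising a smallest entry of a nonzero vector by one multiplies N by at
  least 3/2. By dominated convergence, B(m,...,m) / N(m,...,m) tends to
  (\<Sum>j\<ge>1. S^(-j))^S = (S - 1)^(-S). Finally N(m,...,m) = (Sm)! / (m!)^S is evaluated with
  Stirling's formula, obtained from the convergence of ln n! - (n + 1/2) ln n + n, with the
  constant identified through Wallis' product.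
\<close>

section \<open>Stirling's formula\<close>

lemma ln_add_one_ge:
  fixes x :: real
  assumes "0 \<le> x"
  shows "x - x^2/2 \<le> ln (1 + x)"
proof -
  let ?f = "\<lambda>x::real. ln (1 + x) - x + x^2/2"
  have "?f 0 \<le> ?f x"
  proof (rule DERIV_nonneg_imp_nondecreasing[OF assms])
    fix y :: real assume y: "0 \<le> y" "y \<le> x"
    have "DERIV ?f y :> y^2 / (1 + y)"
      using y by (auto intro!: derivative_eq_intros simp: field_simps power2_eq_square)
    then show "\<exists>d. DERIV ?f y :> d \<and> d \<ge> 0"
      using y by auto
  qed
  then show ?thesis by simp
qed

lemma ln_add_one_le:
  fixes x :: real
  assumes "0 \<le> x"
  shows "ln (1 + x) \<le> x - x^2/2 + x^3/3"
proof -
  let ?f = "\<lambda>x::real. x - x^2/2 + x^3/3 - ln (1 + x)"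
  have "?f 0 \<le> ?f x"
  proof (rule DERIV_nonneg_imp_nondecreasing[OF assms])
    fix y :: real assume y: "0 \<le> y" "y \<le> x"
    have "DERIV ?f y :> y^3 / (1 + y)"
      using y by (auto intro!: derivative_eq_intros
                       simp: field_simps power2_eq_square power3_eq_cube)
    then show "\<exists>d. DERIV ?f y :> d \<and> d \<ge> 0"
      using y by auto
  qed
  then show ?thesis by simp
qed

lemma stirling_increment_bound:
  fixes x :: real
  assumes "0 < x" "x \<le> 1"
  shows "\<bar>(1/x + 1/2) * ln (1 + x) - 1\<bar> \<le> x^2"
proof -
  define c where "c = 1/x + 1/2"
  have c: "c > 0" using assms by (simp add: c_def add_pos_pos)
  have "c * (x - x^2/2) \<le> c * ln (1 + x)"
    using mult_left_mono[OF ln_add_one_ge, of x c] assms c by simp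
  moreover have "c * (x - x^2/2) = 1 - x^2/4"
    using assms by (simp add: c_def field_simps power2_eq_square)
  moreover have "c * ln (1 + x) \<le> c * (x - x^2/2 + x^3/3)"
    using mult_left_mono[OF ln_add_one_le, of x c] assms c by simp
  moreover have "c * (x - x^2/2 + x^3/3) = 1 + x^2/12 + x^3/6"
    using assms by (simp add: c_def field_simps power2_eq_square power3_eq_cube)
  moreover have "x^3 \<le> x^2"
    using assms by (simp add: power3_eq_cube power2_eq_square mult_left_le)
  ultimately show ?thesis
    unfolding c_def[symmetric] abs_le_iff using zero_le_power2[of x] by linarith
qed

lemma stirling_log_convergent:
  "convergent (\<lambda>n. ln (fact n) - (real n + 1/2) * ln (real n) + real n)"
proof -
  define a where "a n = ln (fact n) - (real n + 1/2) * ln (real n) + real n" for n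
  define b where "b k = a (Suc (Suc k)) - a (Suc k)" for k
  have b_eq: "b k = - ((real (Suc k) + 1/2) * ln (1 + 1 / real (Suc k)) - 1)" for k
  proof -
    define n where "n = real (Suc k)"
    have n: "n > 0" "real (Suc (Suc k)) = n + 1" by (simp_all add: n_def)
    have "1 + 1 / n = (n + 1) / n"
      using n by (simp add: field_simps)
    then have "ln (n + 1) = ln n + ln (1 + 1 / n)"
      using n by (simp add: ln_div)
    moreover have "ln (fact (Suc (Suc k)) :: real) = ln (n + 1) + ln (fact (Suc k))"
      using n by (simp add: ln_mult del: of_nat_Suc)
    ultimately show ?thesis
      unfolding b_def a_def n(2) n_def[symmetric] by (simp add: algebra_simps)
  qed
  have "norm (b k) \<le> (1 / real (Suc k))^2" for k
    using stirling_increment_bound[of "1 / real (Suc k)"] unfolding b_eq by (simp del: of_nat_Suc)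
  moreover have "summable (\<lambda>k. (1 / real (Suc k))^2)"
    using inverse_power_summable[of 2, where 'a=real]
    by (subst summable_Suc_iff) (simp add: inverse_eq_divide power_one_over)
  ultimately have "summable b"
    by (rule summable_comparison_test'[rotated])
  then have "(\<lambda>n. a 1 + (\<Sum>k<n. b k)) \<longlonglongrightarrow> a 1 + suminf b"
    by (intro tendsto_intros summable_LIMSEQ)
  moreover have "a 1 + (\<Sum>k<n. b k) = a (Suc n)" for n
    unfolding b_def by (subst sum_lessThan_telescope) simp
  ultimately have "convergent (\<lambda>n. a (Suc n))"
    by (auto simp: convergent_def)
  then show ?thesis
    unfolding a_def[symmetric] by (subst convergent_Suc_iff[symmetric])
qed

lemma wallis_product_fact:
  "(\<Prod>k=1..n. (4 * real k^2) / (4 * real k^2 - 1)) =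
     16^n * (fact n)^4 / ((fact (2*n))^2 * (2 * real n + 1))"
proof (induction n)
  case (Suc n)
  have step: "16^n * a^4 / (b^2 * (2*x + 1)) * (4*(x+1)^2 / ((2*x+1)*(2*x+3))) =
       16^Suc n * ((x+1)*a)^4 / (((2*x+2)*(2*x+1)*b)^2 * (2*x+3))"
    if "a > 0" "b > 0" "x \<ge> 0" for a b x :: real
    using that by (simp add: divide_simps) algebra
  have "(\<Prod>k=1..Suc n. (4 * real k^2) / (4 * real k^2 - 1))
      = (\<Prod>k=1..n. (4 * real k^2) / (4 * real k^2 - 1)) * (4 * real (Suc n)^2 / (4 * real (Suc n)^2 - 1))"
    by (simp add: prod.nat_ivl_Suc')
  also have "\<dots> = 16^n * (fact n)^4 / ((fact (2*n))^2 * (2 * real n + 1))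
                 * (4 * (real n + 1)^2 / ((2 * real n + 1) * (2 * real n + 3)))"
  proof -
    have "4 * real (Suc n)^2 - 1 = (2 * real n + 1) * (2 * real n + 3)"
      by (simp add: algebra_simps power2_eq_square)
    then show ?thesis
      unfolding Suc.IH by simp
  qed
  also have "\<dots> = 16^Suc n * ((real n + 1) * fact n)^4
                 / (((2 * real n + 2) * (2 * real n + 1) * fact (2*n))^2 * (2 * real n + 3))"
    by (rule step) auto
  also have "\<dots> = 16^Suc n * (fact (Suc n))^4 / ((fact (2 * Suc n))^2 * (2 * real (Suc n) + 1))"
    by (simp add: algebra_simps)
  finally show ?case .
qed simp

definition stirling_ratio :: "nat \<Rightarrow> real" where
  "stirling_ratio n = fact n / (sqrt (real n) * (real n / exp 1)^n)"

lemma stirling_ratio_eq_exp: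
  assumes "n \<ge> 1"
  shows "stirling_ratio n = exp (ln (fact n) - (real n + 1/2) * ln (real n) + real n)"
proof -
  have "exp ((real n + 1/2) * ln (real n)) = real n powr (real n + 1/2)"
    using assms by (simp add: powr_def)
  also have "\<dots> = real n ^ n * sqrt (real n)"
    using assms by (simp add: powr_add powr_half_sqrt powr_realpow)
  moreover have "exp (real n) = exp 1 ^ n"
    using exp_of_nat_mult[of n 1] by simp
  ultimately have "exp (ln (fact n) - (real n + 1/2) * ln (real n) + real n)
      = fact n * exp 1 ^ n / (real n ^ n * sqrt (real n))"
    by (simp add: exp_add exp_diff)
  then show ?thesis
    unfolding stirling_ratio_def by (simp add: power_divide field_simps)
qed

lemma stirling_ratio_convergent: "\<exists>c>0. stirling_ratio \<longlonglongrightarrow> c"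
proof -
  obtain A where "(\<lambda>n. ln (fact n) - (real n + 1/2) * ln (real n) + real n) \<longlonglongrightarrow> A"
    using stirling_log_convergent by (auto simp: convergent_def)
  then have "(\<lambda>n. exp (ln (fact n) - (real n + 1/2) * ln (real n) + real n)) \<longlonglongrightarrow> exp A"
    by (rule tendsto_exp)
  moreover have "\<forall>\<^sub>F n in sequentially.
      exp (ln (fact n) - (real n + 1/2) * ln (real n) + real n) = stirling_ratio n"
    using eventually_ge_at_top[of 1] by eventually_elim (simp add: stirling_ratio_eq_exp)
  ultimately have "stirling_ratio \<longlonglongrightarrow> exp A"
    by (rule Lim_transform_eventually)
  then show ?thesis
    using exp_gt_zero by blast
qed

lemma wallis_product_stirling_ratio:
  assumes "n \<ge> 1"
  shows "(\<Prod>k=1..n. (4 * real k^2) / (4 * real k^2 - 1)) =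
           stirling_ratio n ^ 4 / stirling_ratio (2*n) ^ 2 * (real n / (2 * (2 * real n + 1)))"
proof -
  define E where "E = (real n / exp 1)^n"
  have pos: "stirling_ratio n > 0" "stirling_ratio (2*n) > 0" "real n > 0" "E > 0"
    using assms by (simp_all add: stirling_ratio_def E_def)
  have fact_n: "fact n = stirling_ratio n * sqrt (real n) * E"
    and fact_2n: "fact (2*n) = stirling_ratio (2*n) * sqrt (2 * real n) * (4^n * E^2)"
  proof -
    have "((2::real)^n)^2 = 4^n"
      by (simp add: power2_eq_square flip: power_mult_distrib)
    then have "(real (2*n) / exp 1)^(2*n) = 4^n * E^2"
      unfolding E_def by (simp add: power_mult_distrib power_even_eq power_divide)
    then show "fact (2*n) = stirling_ratio (2*n) * sqrt (2 * real n) * (4^n * E^2)"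
      using assms pos unfolding stirling_ratio_def by simp
  qed (use assms in \<open>simp add: stirling_ratio_def E_def\<close>)
  have p4: "(stirling_ratio n * sqrt (real n) * E)^4 = stirling_ratio n ^ 4 * real n ^ 2 * E^4"
    using power_mult[of "sqrt (real n)" 2 2] by (simp add: power_mult_distrib)
  have p2: "(stirling_ratio (2*n) * sqrt (2 * real n) * (4^n * E^2))^2
      = stirling_ratio (2*n) ^ 2 * (2 * real n) * 16^n * E^4"
  proof -
    have "((4::real)^n)^2 = 16^n"
      by (simp add: power2_eq_square flip: power_mult_distrib)
    then show ?thesis
      using power_mult[of E 2 2] by (simp add: power_mult_distrib)
  qed
  show ?thesis
    unfolding wallis_product_fact fact_n fact_2n p4 p2 using pos
    by (simp add: divide_simps power2_eq_square)
qed

lemma stirling_ratio_limit: "stirling_ratio \<longlonglongrightarrow> sqrt (2 * pi)"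
proof -
  obtain c where c: "c > 0" "stirling_ratio \<longlonglongrightarrow> c"
    using stirling_ratio_convergent by blast
  have c2: "(\<lambda>n. stirling_ratio (2*n)) \<longlonglongrightarrow> c"
    using LIMSEQ_subseq_LIMSEQ[OF c(2), of "\<lambda>n. 2*n"] by (simp add: strict_mono_def o_def)
  have quarter: "(\<lambda>n. real n / (2 * (2 * real n + 1))) \<longlonglongrightarrow> 1/4"
    by real_asymp
  have "(\<lambda>n. stirling_ratio n ^ 4 / stirling_ratio (2*n) ^ 2 * (real n / (2 * (2 * real n + 1))))
      \<longlonglongrightarrow> c^4 / c^2 * (1/4)"
    using c(1) by (intro tendsto_mult[OF tendsto_divide[OF tendsto_power[OF c(2)] tendsto_power[OF c2]] quarter])
      simp
  moreover have "\<forall>\<^sub>F n in sequentially.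
      stirling_ratio n ^ 4 / stirling_ratio (2*n) ^ 2 * (real n / (2 * (2 * real n + 1)))
      = (\<Prod>k=1..n. (4 * real k^2) / (4 * real k^2 - 1))"
    using eventually_ge_at_top[of 1] by eventually_elim (simp only: wallis_product_stirling_ratio)
  ultimately have "(\<lambda>n. \<Prod>k=1..n. (4 * real k^2) / (4 * real k^2 - 1)) \<longlonglongrightarrow> c^4 / c^2 * (1/4)"
    by (rule Lim_transform_eventually)
  then have "c^4 / c^2 * (1/4) = pi / 2"
    using wallis LIMSEQ_unique by blast
  then have "c^2 = 2 * pi"
    using c(1) by (simp add: power2_eq_square power4_eq_xxxx)
  then have "c = sqrt (2 * pi)"
    using c(1) real_sqrt_unique by fastforce
  then show ?thesis using c(2) by simp
qed

theorem fact_asymp_equiv_stirling: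
  "(\<lambda>n. fact n :: real) \<sim>[at_top] (\<lambda>n. sqrt (2 * pi * real n) * (real n / exp 1)^n)"
proof (rule asymp_equivI')
  have "(\<lambda>n. stirling_ratio n / sqrt (2 * pi)) \<longlonglongrightarrow> sqrt (2 * pi) / sqrt (2 * pi)"
    by (intro tendsto_intros stirling_ratio_limit) simp
  then show "(\<lambda>n. fact n / (sqrt (2 * pi * real n) * (real n / exp 1)^n)) \<longlonglongrightarrow> 1"
    by (simp add: stirling_ratio_def real_sqrt_mult field_simps)
qed

section \<open>Dominated convergence for finite sums\<close>

lemma tendsto_sum_dominated:
  fixes f :: "nat \<Rightarrow> 'a \<Rightarrow> 'b::real_normed_vector"
  assumes fin: "\<And>K. finite (A K)" and inc: "incseq A"
    and lim: "\<And>d. (\<lambda>m. f m d) \<longlonglongrightarrow> v d"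
    and bound: "\<And>m d. d \<in> A m \<Longrightarrow> norm (f m d) \<le> g d"
    and g: "(\<lambda>K. \<Sum>d\<in>A K. g d) \<longlonglongrightarrow> G"
    and v: "(\<lambda>K. \<Sum>d\<in>A K. v d) \<longlonglongrightarrow> L"
  shows "(\<lambda>m. \<Sum>d\<in>A m. f m d) \<longlonglongrightarrow> L"
proof (rule tendstoI)
  fix \<epsilon> :: real
  assume "\<epsilon> > 0"
  have "incseq (\<lambda>K. \<Sum>d\<in>A K. g d)"
  proof (intro monoI sum_mono2)
    fix K K' d
    assume "K \<le> K'" "d \<in> A K' - A K"
    then show "0 \<le> g d"
      using bound[of d K'] norm_ge_zero order_trans by blast
  qed (use fin inc in \<open>auto simp: incseq_def\<close>)
  then have g_le: "(\<Sum>d\<in>A K. g d) \<le> G" for K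
    using g by (rule incseq_le)
  have "\<forall>\<^sub>F K in sequentially. dist (\<Sum>d\<in>A K. g d) G < \<epsilon>/3 \<and> dist (\<Sum>d\<in>A K. v d) L < \<epsilon>/3"
    using \<open>\<epsilon> > 0\<close> by (intro eventually_conj tendstoD g v) simp_all
  then obtain K where K: "dist (\<Sum>d\<in>A K. g d) G < \<epsilon>/3" "dist (\<Sum>d\<in>A K. v d) L < \<epsilon>/3"
    by (auto simp: eventually_sequentially)
  have "\<forall>\<^sub>F m in sequentially. dist (\<Sum>d\<in>A K. f m d) (\<Sum>d\<in>A K. v d) < \<epsilon>/3"
    using \<open>\<epsilon> > 0\<close> by (intro tendstoD tendsto_sum lim) simp
  then show "\<forall>\<^sub>F m in sequentially. dist (\<Sum>d\<in>A m. f m d) L < \<epsilon>"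
    using eventually_ge_at_top[of K]
  proof eventually_elim
    case (elim m)
    then have "A K \<subseteq> A m"
      using inc by (simp add: incseq_def)
    have "norm (\<Sum>d\<in>A m - A K. f m d) \<le> (\<Sum>d\<in>A m - A K. g d)"
      using bound by (intro sum_norm_le) blast
    also have "\<dots> = (\<Sum>d\<in>A m. g d) - (\<Sum>d\<in>A K. g d)"
      using sum_diff[OF fin \<open>A K \<subseteq> A m\<close>] .
    finally have "norm (\<Sum>d\<in>A m - A K. f m d) < \<epsilon>/3"
      using g_le[of m] K(1) by (simp only: dist_real_def abs_less_iff) linarith
    moreover have "norm (((\<Sum>d\<in>A K. f m d) - (\<Sum>d\<in>A K. v d)) + ((\<Sum>d\<in>A K. v d) - L)) < 2*\<epsilon>/3"
      using elim K(2) unfolding dist_norm by (intro norm_triangle_lt) linarith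
    ultimately have "norm ((\<Sum>d\<in>A m - A K. f m d)
        + (((\<Sum>d\<in>A K. f m d) - (\<Sum>d\<in>A K. v d)) + ((\<Sum>d\<in>A K. v d) - L))) < \<epsilon>"
      by (intro norm_triangle_lt) linarith
    moreover have "(\<Sum>d\<in>A m. f m d) - L
        = (\<Sum>d\<in>A m - A K. f m d) + (((\<Sum>d\<in>A K. f m d) - (\<Sum>d\<in>A K. v d)) + ((\<Sum>d\<in>A K. v d) - L))"
      using sum.subset_diff[OF \<open>A K \<subseteq> A m\<close> fin] by simp
    ultimately show ?case
      by (simp only: dist_norm)
  qed
qed

lemma tendsto_sum_PiE_geometric_prod:
  fixes q :: real
  assumes "\<bar>q\<bar> < 1"
  shows "(\<lambda>K. \<Sum>d \<in> PiE {..<S} (\<lambda>_. {..<K}). \<Prod>i<S. q ^ Suc (d i)) \<longlonglongrightarrow> (q / (1 - q)) ^ S"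
proof -
  have "(\<lambda>j. q * q ^ j) sums (q * (1 / (1 - q)))"
    using assms by (intro sums_mult geometric_sums) simp
  then have "(\<lambda>K. \<Sum>j<K. q ^ Suc j) \<longlonglongrightarrow> q / (1 - q)"
    by (simp add: sums_def)
  then have "(\<lambda>K. (\<Sum>j<K. q ^ Suc j) ^ S) \<longlonglongrightarrow> (q / (1 - q)) ^ S"
    by (rule tendsto_power)
  then show ?thesis
    by (simp add: prod_sum_PiE[of "{..<S}" "\<lambda>_. {..<_}" "\<lambda>_ j. q ^ Suc j", simplified])
qed

section \<open>Multinomial coefficients\<close>

lemma sum_fun_upd_Suc:
  fixes t :: "'a \<Rightarrow> nat"
  assumes "finite A" "i \<in> A"
  shows "(\<Sum>j\<in>A. (t(i := Suc (t i))) j) = Suc (\<Sum>j\<in>A. t j)"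
proof -
  have "(\<Sum>j\<in>A. (t(i := Suc (t i))) j) = (\<Sum>j\<in>A. t j + (if j = i then 1 else 0))"
    by (intro sum.cong) auto
  then show ?thesis
    using assms by (simp add: sum.distrib)
qed

definition multinomial :: "nat \<Rightarrow> (nat \<Rightarrow> nat) \<Rightarrow> real" where
  "multinomial S t = fact (\<Sum>i<S. t i) / (\<Prod>i<S. fact (t i))"

lemma B_eq_sum_multinomial:
  "B S m = (\<Sum>l \<in> PiE {..<S} (\<lambda>i. {..<m i}). multinomial S l)"
  unfolding B_def multinomial_def by simp

lemma multinomial_cong:
  assumes "\<And>i. i < S \<Longrightarrow> t i = u i"
  shows "multinomial S t = multinomial S u"
proof -
  have "(\<Sum>i<S. t i) = (\<Sum>i<S. u i)" "(\<Prod>i<S. fact (t i) :: real) = (\<Prod>i<S. fact (u i))"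
    using assms by (auto intro: sum.cong prod.cong)
  then show ?thesis
    unfolding multinomial_def by simp
qed

lemma multinomial_pos: "multinomial S t > 0"
  unfolding multinomial_def by (simp add: prod_pos)

lemma multinomial_fun_upd_Suc:
  assumes "i < S"
  shows "multinomial S (t(i := Suc (t i))) * Suc (t i) = multinomial S t * Suc (\<Sum>j<S. t j)"
proof -
  define P where "P = (\<Prod>j<S. fact (t j) :: real)"
  have "(\<Prod>j<S. fact ((t(i := Suc (t i))) j) :: real)
      = (\<Prod>j<S. fact (t j) * (if j = i then real (Suc (t i)) else 1))"
    by (intro prod.cong) (auto simp del: of_nat_Suc)
  also have "\<dots> = P * Suc (t i)"
    using assms by (simp add: P_def prod.distrib algebra_simps)
  finally have prod_upd: "(\<Prod>j<S. fact ((t(i := Suc (t i))) j) :: real) = P * Suc (t i)" .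
  have "P > 0"
    by (simp add: P_def prod_pos)
  then show ?thesis
    unfolding multinomial_def prod_upd P_def[symmetric]
      sum_fun_upd_Suc[OF finite_lessThan lessThan_iff[THEN iffD2, OF assms]]
    by (simp add: field_simps del: of_nat_Suc)
qed

lemma eq_const_if_sum_ge:
  fixes t :: "nat \<Rightarrow> nat"
  assumes "\<forall>i<S. t i \<le> m" "S * m \<le> (\<Sum>i<S. t i)"
  shows "\<forall>i<S. t i = m"
proof (intro allI impI)
  fix i
  assume "i < S"
  have "(\<Sum>i<S. t i) \<le> (\<Sum>i<S. m)"
    using assms(1) by (intro sum_mono) auto
  with assms(2) have "(\<Sum>i<S. t i) = (\<Sum>i<S. m)"
    by simp
  then show "t i = m"
    using sum_mono_inv[of t "{..<S}" "\<lambda>_. m" i] assms(1) \<open>i < S\<close> by simp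
qed

lemma three_Suc_min_le_two_Suc_sum:
  fixes t :: "nat \<Rightarrow> nat"
  assumes "S \<ge> 2" "i < S" "\<forall>j<S. t i \<le> t j" "0 < (\<Sum>j<S. t j)"
  shows "3 * Suc (t i) \<le> 2 * Suc (\<Sum>j<S. t j)"
proof -
  have "2 * t i \<le> S * t i"
    using assms(1) by simp
  also have "\<dots> \<le> (\<Sum>j<S. t j)"
    using assms(3) sum_mono[of "{..<S}" "\<lambda>_. t i" t] by simp
  finally show ?thesis
    using assms(4) by arith
qed

lemma multinomial_le_fun_upd_Suc_min:
  assumes "S \<ge> 2" "i < S" "\<forall>j<S. t i \<le> t j" "0 < (\<Sum>j<S. t j)"
  shows "multinomial S t \<le> 2/3 * multinomial S (t(i := Suc (t i)))"
proof -
  define T where "T = (\<Sum>j<S. t j)"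
  have "3 * Suc (t i) \<le> 2 * Suc T"
    unfolding T_def by (rule three_Suc_min_le_two_Suc_sum[OF assms])
  then have "real (3 * Suc (t i)) \<le> real (2 * Suc T)"
    by (rule of_nat_mono)
  then have ratio: "3 * real (Suc (t i)) \<le> 2 * real (Suc T)"
    by (simp only: of_nat_mult of_nat_numeral)
  define t' where "t' = t(i := Suc (t i))"
  have "multinomial S t * real (Suc T) = multinomial S t' * real (Suc (t i))"
    unfolding T_def t'_def using multinomial_fun_upd_Suc[OF assms(2), of t] by simp
  then have "3 * multinomial S t * real (Suc T) = multinomial S t' * (3 * real (Suc (t i)))"
    by (simp only: mult_ac)
  also have "\<dots> \<le> multinomial S t' * (2 * real (Suc T))"
    using ratio multinomial_pos[of S t'] by (intro mult_left_mono) auto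
  finally have "(3 * multinomial S t) * real (Suc T) \<le> (2 * multinomial S t') * real (Suc T)"
    by (simp only: mult_ac)
  then show ?thesis
    unfolding t'_def[symmetric] by simp
qed

lemma multinomial_le_geometric_pos:
  assumes S: "S \<ge> 2"
  shows "\<forall>i<S. t i \<le> m \<Longrightarrow> 0 < (\<Sum>i<S. t i) \<Longrightarrow>
           multinomial S t \<le> multinomial S (\<lambda>_. m) * (2/3)^(S*m - (\<Sum>i<S. t i))"
proof (induction "S*m - (\<Sum>i<S. t i)" arbitrary: t)
  case 0
  have "S * m \<le> (\<Sum>i<S. t i)"
    using "0.hyps" by linarith
  with "0.prems"(1) have "\<forall>i<S. t i = m"
    by (rule eq_const_if_sum_ge)
  then have "multinomial S t = multinomial S (\<lambda>_. m)"
    by (intro multinomial_cong) simp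
  then show ?case
    unfolding "0.hyps"[symmetric] by simp
next
  case (Suc D t)
  define T where "T = (\<Sum>i<S. t i)"
  obtain i where i: "i < S" "\<forall>j<S. t i \<le> t j"
    using ex_has_least_nat[of "\<lambda>i. i < S" 0 t] S by auto
  have "t i < m"
  proof (rule ccontr)
    assume "\<not> t i < m"
    then have "m \<le> t j" if "j < S" for j
      using i(2) that by fastforce
    then have "(\<Sum>j<S. m) \<le> T"
      unfolding T_def by (intro sum_mono) simp
    with Suc.hyps(2) show False
      by (simp add: T_def)
  qed
  define t' where "t' = t(i := Suc (t i))"
  have sum_t': "(\<Sum>j<S. t' j) = Suc T"
    unfolding t'_def T_def by (rule sum_fun_upd_Suc) (use i(1) in auto)
  have D: "D = S*m - (\<Sum>j<S. t' j)"
    using Suc.hyps(2) sum_t' by (simp add: T_def)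
  have bounded: "\<forall>j<S. t' j \<le> m"
    using Suc.prems(1) \<open>t i < m\<close> by (simp add: t'_def)
  have "0 < (\<Sum>j<S. t' j)"
    by (simp add: sum_t')
  with Suc.hyps(1)[OF D bounded] have IH: "multinomial S t' \<le> multinomial S (\<lambda>_. m) * (2/3)^D"
    by (simp only: D)
  have "multinomial S t \<le> 2/3 * multinomial S t'"
    unfolding t'_def by (rule multinomial_le_fun_upd_Suc_min[OF S i Suc.prems(2)])
  also have "\<dots> \<le> 2/3 * (multinomial S (\<lambda>_. m) * (2/3)^D)"
    using IH by simp
  also have "\<dots> = multinomial S (\<lambda>_. m) * (2/3)^(S*m - (\<Sum>i<S. t i))"
    unfolding Suc.hyps(2)[symmetric] by simp
  finally show ?case .
qed

lemma multinomial_le_geometric: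
  assumes "S \<ge> 2" "m \<ge> 1" "\<forall>i<S. t i \<le> m"
  shows "multinomial S t \<le> 3/2 * multinomial S (\<lambda>_. m) * (2/3)^(S*m - (\<Sum>i<S. t i))"
proof (cases "(\<Sum>i<S. t i) = 0")
  case True
  \<comment> \<open>The zero vector has the same coefficient as the unit vector t', which has a positive sum.\<close>
  define t' where "t' = t(0 := Suc (t 0))"
  have "t 0 = 0"
    using True assms(1) by simp
  then have "multinomial S t = multinomial S t'"
    using multinomial_fun_upd_Suc[of 0 S t] True assms(1) by (simp add: t'_def)
  also have "\<dots> \<le> multinomial S (\<lambda>_. m) * (2/3)^(S*m - 1)"
    using multinomial_le_geometric_pos[OF assms(1), of t' m] assms \<open>t 0 = 0\<close>
      sum_fun_upd_Suc[of "{..<S}" 0 t] True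
    by (simp add: t'_def)
  also have "(2/3::real)^(S*m - 1) = 3/2 * (2/3)^(S*m)"
  proof -
    have "S*m > 0"
      using assms(1,2) by simp
    then obtain k where "S*m = Suc k"
      using gr0_implies_Suc by blast
    then show ?thesis by simp
  qed
  finally show ?thesis
    using True by simp
next
  case False
  have "multinomial S t \<le> multinomial S (\<lambda>_. m) * (2/3)^(S*m - (\<Sum>i<S. t i))"
    by (rule multinomial_le_geometric_pos[OF assms(1,3)]) (use False in linarith)
  moreover have "0 \<le> multinomial S (\<lambda>_. m) * (2/3)^(S*m - (\<Sum>i<S. t i))"
    using multinomial_pos[of S "\<lambda>_. m"] by simp
  ultimately show ?thesis
    by linarith
qed

lemma multinomial_shift_pred:
  assumes "i < S" "0 < e i" "\<forall>j<S. e j \<le> m"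
  shows "multinomial S (\<lambda>j. m - (e(i := e i - 1)) j) * (real m + 1 - real (e i))
           = multinomial S (\<lambda>j. m - e j) * (real S * real m + 1 - real (\<Sum>j<S. e j))"
proof -
  define t where "t = (\<lambda>j. m - e j)"
  have "(\<Sum>j<S. e j) \<le> S * m"
    using sum_mono[of "{..<S}" e "\<lambda>_. m"] assms(3) by simp
  moreover have "(\<Sum>j<S. t j) = S * m - (\<Sum>j<S. e j)"
    unfolding t_def using sum_subtractf_nat[of "{..<S}" e "\<lambda>_. m"] assms(3) by simp
  ultimately have sum_t: "real (Suc (\<Sum>j<S. t j)) = real S * real m + 1 - real (\<Sum>j<S. e j)"
    by (simp add: of_nat_diff)
  have t_i: "real (Suc (t i)) = real m + 1 - real (e i)"
    using assms(1,3) by (simp add: t_def of_nat_diff)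
  have "multinomial S (t(i := Suc (t i))) = multinomial S (\<lambda>j. m - (e(i := e i - 1)) j)"
    using assms by (intro multinomial_cong) (auto simp: t_def)
  with multinomial_fun_upd_Suc[OF assms(1), of t] show ?thesis
    unfolding sum_t t_i by (simp only: t_def)
qed

lemma multinomial_shift_ratio_limit:
  assumes "S \<ge> 1"
  shows "(\<lambda>m. multinomial S (\<lambda>i. m - e i) / multinomial S (\<lambda>_. m))
           \<longlonglongrightarrow> inverse (real S) ^ (\<Sum>i<S. e i)"
proof (induction "\<Sum>i<S. e i" arbitrary: e)
  case 0
  then have "multinomial S (\<lambda>i. m - e i) = multinomial S (\<lambda>_. m)" for m
    by (intro multinomial_cong) simp
  then show ?case
    using "0" multinomial_pos[of S] by (simp add: less_imp_neq[symmetric])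
next
  case (Suc n e)
  have "(\<Sum>i<S. e i) \<noteq> 0"
    using Suc.hyps(2) by linarith
  then obtain i where i: "i < S" "e i > 0"
    by (auto simp: sum_eq_0_iff)
  define e' where "e' = e(i := e i - 1)"
  have e: "e = e'(i := Suc (e' i))"
    using i(2) by (auto simp: e'_def)
  have sum_e: "(\<Sum>j<S. e j) = Suc (\<Sum>j<S. e' j)"
    unfolding e by (rule sum_fun_upd_Suc) (use i(1) in auto)
  have IH: "(\<lambda>m. multinomial S (\<lambda>j. m - e' j) / multinomial S (\<lambda>_. m)) \<longlonglongrightarrow> inverse (real S) ^ n"
    using Suc.hyps(1)[of e'] Suc.hyps(2) sum_e by simp
  have "(\<lambda>m. (real m + 1 - real (e i)) / (real S * real m + 1 - real (Suc n)))
          \<longlonglongrightarrow> inverse (real S)"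
    using assms by real_asymp
  with IH have "(\<lambda>m. multinomial S (\<lambda>j. m - e' j) / multinomial S (\<lambda>_. m)
          * ((real m + 1 - real (e i)) / (real S * real m + 1 - real (Suc n))))
          \<longlonglongrightarrow> inverse (real S) ^ n * inverse (real S)"
    by (rule tendsto_mult)
  moreover have "\<forall>\<^sub>F m in sequentially.
      multinomial S (\<lambda>j. m - e' j) / multinomial S (\<lambda>_. m)
        * ((real m + 1 - real (e i)) / (real S * real m + 1 - real (Suc n)))
      = multinomial S (\<lambda>j. m - e j) / multinomial S (\<lambda>_. m)"
    using eventually_ge_at_top[of "Suc n"]
  proof eventually_elim
    case (elim m)
    have e_le: "\<forall>j<S. e j \<le> m"
      using member_le_sum[of _ "{..<S}" e] elim Suc.hyps(2) by fastforce
    have "Suc n \<le> S * m"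
      using elim mult_le_mono1[OF assms, of m] by linarith
    then have "real (Suc n) \<le> real S * real m"
      by (simp only: of_nat_le_iff flip: of_nat_mult)
    then have "real S * real m + 1 - real (Suc n) > 0"
      by linarith
    then show ?case
      using multinomial_shift_pred[OF i e_le] Suc.hyps(2)
      by (simp add: e'_def flip: times_divide_times_eq)
  qed
  ultimately have "(\<lambda>m. multinomial S (\<lambda>j. m - e j) / multinomial S (\<lambda>_. m))
      \<longlonglongrightarrow> inverse (real S) ^ n * inverse (real S)"
    by (rule Lim_transform_eventually)
  then show ?case
    unfolding Suc.hyps(2)[symmetric] by (simp add: mult.commute)
qed

lemma central_multinomial_asymp_equiv:
  assumes S: "S \<ge> 1"
  shows "(\<lambda>m. multinomial S (\<lambda>_. m)) \<sim>[at_top]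
           (\<lambda>m. real S powr (real S * real m + 1/2) / (2 * pi * real m) powr ((real S - 1) / 2))"
proof -
  let ?st = "\<lambda>n. sqrt (2 * pi * real n) * (real n / exp 1) ^ n"
  have "(\<lambda>m. fact (S * m) :: real) \<sim>[at_top] (\<lambda>m. ?st (S * m))"
    using S by (intro asymp_equiv_compose'[OF fact_asymp_equiv_stirling] mult_nat_left_at_top) simp
  moreover have "(\<lambda>m. fact m ^ S :: real) \<sim>[at_top] (\<lambda>m. ?st m ^ S)"
    by (intro asymp_equiv_power fact_asymp_equiv_stirling)
  ultimately have "(\<lambda>m. fact (S * m) / fact m ^ S :: real) \<sim>[at_top] (\<lambda>m. ?st (S * m) / ?st m ^ S)"
    by (rule asymp_equiv_divide)
  moreover have "multinomial S (\<lambda>_. m) = fact (S * m) / fact m ^ S" for m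
    by (simp add: multinomial_def mult.commute)
  moreover have "\<forall>\<^sub>F m in at_top. ?st (S * m) / ?st m ^ S
      = real S powr (real S * real m + 1/2) / (2 * pi * real m) powr ((real S - 1) / 2)"
    using eventually_ge_at_top[of 1]
  proof eventually_elim
    case (elim m)
    define u where "u = 2 * pi * real m"
    have u: "u > 0"
      using elim by (simp add: u_def)
    define E where "E = (real m / exp 1) ^ (S * m)"
    have E: "E > 0"
      using elim by (simp add: E_def)
    have "sqrt u ^ S = sqrt u * u powr ((real S - 1) / 2)"
      using S u by (simp add: powr_half_sqrt[symmetric] powr_realpow[symmetric] powr_powr
                         flip: powr_add) (simp add: field_simps)
    then have "?st m ^ S = sqrt u * u powr ((real S - 1) / 2) * E"
      by (simp add: u_def E_def power_mult_distrib mult.commute flip: power_mult)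
    moreover have "?st (S * m) = sqrt (real S) * sqrt u * (real S ^ (S * m) * E)"
      by (simp add: u_def E_def real_sqrt_mult power_mult_distrib[symmetric] mult_ac)
    ultimately have "?st (S * m) / ?st m ^ S = real S ^ (S * m) * sqrt (real S) / u powr ((real S - 1) / 2)"
      using u E by (simp add: field_simps)
    also have "real S ^ (S * m) * sqrt (real S) = real S powr (real S * real m + 1/2)"
      using S by (simp add: powr_add powr_half_sqrt powr_realpow[symmetric])
    finally show ?case
      by (simp only: u_def)
  qed
  ultimately show ?thesis
    by (simp add: asymp_equiv_refl_ev asymp_equiv_trans)
qed

section \<open>The diagonal of B\<close>

lemma B_diag_eq_sum_reflected:
  "B S (\<lambda>_. m) = (\<Sum>d \<in> PiE {..<S} (\<lambda>_. {..<m}). multinomial S (\<lambda>i. m - Suc (d i)))"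
proof -
  define \<phi> where "\<phi> d = restrict (\<lambda>i. m - Suc (d i)) {..<S}" for d :: "nat \<Rightarrow> nat"
  let ?X = "PiE {..<S} (\<lambda>_. {..<m})"
  have involution: "\<phi> (\<phi> d) = d" if "d \<in> ?X" for d
  proof
    fix i
    show "\<phi> (\<phi> d) i = d i"
    proof (cases "i < S")
      case True
      then have "d i < m"
        using that by (auto simp: PiE_def Pi_def)
      then show ?thesis
        using True by (simp add: \<phi>_def Suc_diff_Suc)
    qed (use that in \<open>auto simp: \<phi>_def PiE_def extensional_def\<close>)
  qed
  have closed: "\<phi> d \<in> ?X" if "d \<in> ?X" for d
    using that by (auto simp: \<phi>_def PiE_def Pi_def)
  have "(\<Sum>l\<in>?X. multinomial S l) = (\<Sum>d\<in>?X. multinomial S (\<lambda>i. m - Suc (d i)))"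
  proof (rule sum.reindex_bij_witness[of _ \<phi> \<phi>])
    fix d
    assume "d \<in> ?X"
    then show "multinomial S (\<lambda>i. m - Suc (\<phi> d i)) = multinomial S d"
      by (intro multinomial_cong) (auto simp: \<phi>_def PiE_def Pi_def)
  qed (use involution closed in auto)
  then show ?thesis
    by (simp add: B_eq_sum_multinomial)
qed

lemma reflected_multinomial_ratio_le:
  assumes S: "S \<ge> 2" and d: "\<forall>i<S. d i < m"
  shows "multinomial S (\<lambda>i. m - Suc (d i)) / multinomial S (\<lambda>_. m)
           \<le> 3/2 * (\<Prod>i<S. (2/3) ^ Suc (d i))"
proof -
  have "m \<ge> 1"
    using d[rule_format, of 0] S by linarith
  have "(\<Sum>i<S. m - Suc (d i)) = S * m - (\<Sum>i<S. Suc (d i))"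
    using sum_subtractf_nat[of "{..<S}" "\<lambda>i. Suc (d i)" "\<lambda>_. m"] d by (simp add: Suc_le_eq)
  moreover have "(\<Sum>i<S. Suc (d i)) \<le> S * m"
    using sum_mono[of "{..<S}" "\<lambda>i. Suc (d i)" "\<lambda>_. m"] d by (simp add: Suc_le_eq)
  ultimately have "S * m - (\<Sum>i<S. m - Suc (d i)) = (\<Sum>i<S. Suc (d i))"
    by simp
  then have "multinomial S (\<lambda>i. m - Suc (d i))
      \<le> 3/2 * multinomial S (\<lambda>_. m) * (2/3) ^ (\<Sum>i<S. Suc (d i))"
    using multinomial_le_geometric[OF S \<open>m \<ge> 1\<close>, of "\<lambda>i. m - Suc (d i)"] by simp
  then show ?thesis
    using multinomial_pos[of S "\<lambda>_. m"] by (simp add: pos_divide_le_eq mult_ac power_sum)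
qed

lemma sum_reflected_multinomial_ratio_limit:
  assumes S: "S \<ge> 2"
  shows "(\<lambda>m. \<Sum>d \<in> PiE {..<S} (\<lambda>_. {..<m}).
            multinomial S (\<lambda>i. m - Suc (d i)) / multinomial S (\<lambda>_. m))
         \<longlonglongrightarrow> (1 / (real S - 1)) ^ S"
proof (rule tendsto_sum_dominated)
  show "finite (PiE {..<S} (\<lambda>_. {..<K}))" for K :: nat
    by (simp add: finite_PiE)
  show "incseq (\<lambda>m. PiE {..<S} (\<lambda>_. {..<m}))"
    by (intro monoI PiE_mono) auto
  show "(\<lambda>m. multinomial S (\<lambda>i. m - Suc (d i)) / multinomial S (\<lambda>_. m))
          \<longlonglongrightarrow> (\<Prod>i<S. inverse (real S) ^ Suc (d i))" for d
    using multinomial_shift_ratio_limit[of S "\<lambda>i. Suc (d i)"] S by (simp add: power_sum)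
  show "norm (multinomial S (\<lambda>i. m - Suc (d i)) / multinomial S (\<lambda>_. m))
          \<le> 3/2 * (\<Prod>i<S. (2/3) ^ Suc (d i))"
    if "d \<in> PiE {..<S} (\<lambda>_. {..<m})" for m d
    using reflected_multinomial_ratio_le[OF S, of d m] that multinomial_pos[of S]
    by (auto simp: PiE_def Pi_def abs_of_pos)
  show "(\<lambda>K. \<Sum>d \<in> PiE {..<S} (\<lambda>_. {..<K}). 3/2 * (\<Prod>i<S. (2/3::real) ^ Suc (d i)))
          \<longlonglongrightarrow> 3/2 * ((2/3) / (1 - 2/3)) ^ S"
    by (simp only: sum_distrib_left[symmetric])
       (intro tendsto_mult tendsto_const tendsto_sum_PiE_geometric_prod, simp)
  have "\<bar>inverse (real S)\<bar> < 1"
    using S by (simp add: inverse_less_1_iff)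
  moreover have "inverse (real S) / (1 - inverse (real S)) = 1 / (real S - 1)"
    using S by (simp add: field_simps)
  ultimately show "(\<lambda>K. \<Sum>d \<in> PiE {..<S} (\<lambda>_. {..<K}). \<Prod>i<S. inverse (real S) ^ Suc (d i))
          \<longlonglongrightarrow> (1 / (real S - 1)) ^ S"
    using tendsto_sum_PiE_geometric_prod[of "inverse (real S)" S] by simp
qed

theorem mainTheorem17:
  fixes S :: nat
  assumes "S \<ge> 2"
  shows "(\<lambda>m::nat. B S (\<lambda>_. m)) \<sim>[at_top]
         (\<lambda>m::nat. real S powr (real S * real m + 1/2) /
            ((2 * pi * real m) powr ((real S - 1) / 2) * (real S - 1) ^ S))"
proof -
  have "(\<lambda>m. B S (\<lambda>_. m) / multinomial S (\<lambda>_. m)) \<longlonglongrightarrow> (1 / (real S - 1)) ^ S"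
    using sum_reflected_multinomial_ratio_limit[OF assms]
    by (simp add: B_diag_eq_sum_reflected sum_divide_distrib)
  then have "(\<lambda>m. B S (\<lambda>_. m) / multinomial S (\<lambda>_. m)) \<sim>[at_top] (\<lambda>_. (1 / (real S - 1)) ^ S)"
    by (rule tendsto_imp_asymp_equiv_const) (use assms in simp)
  with central_multinomial_asymp_equiv[of S]
  have "(\<lambda>m. multinomial S (\<lambda>_. m) * (B S (\<lambda>_. m) / multinomial S (\<lambda>_. m))) \<sim>[at_top]
        (\<lambda>m. real S powr (real S * real m + 1/2) / (2 * pi * real m) powr ((real S - 1) / 2)
               * (1 / (real S - 1)) ^ S)"
    using assms by (intro asymp_equiv_mult) simp_all
  moreover have "multinomial S t \<noteq> 0" for t
    using multinomial_pos[of S t] by simp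
  ultimately show ?thesis
    by (simp add: power_one_over)
qed

end
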